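(* Let $\mathbf{B}=\mathbf{B}_+\,\dot\cup\,\mathbf{B}'\in\dot{\mathbb{P}}(\mathbb{L}(\mathbf{C}))$ with $|\mathbf{B}|=|\mathbf{C}|$. Suppose every $L\in\mathbf{B}_+$ has a positive monotonic effect on $D$ relative to $\mathbf{C}$, and $\mathbf{W}$ suffices to adjust for confounding of $\mathbf{C}$ on $D$. If for some tree $\mathfrak{T}$ on $\mathbf{B}_+$ and some $\mathbf{w}$ (all conditioning events having positive probability) $$E[D\mid\mathbf{B}=\mathbf{1},\mathbf{W}=\mathbf{w}]-\sum_{L\in\mathbf{B}_+}E[D\mid\mathbf{B}\setminus\{L\}=\mathbf{1},L=0,\mathbf{W}=\mathbf{w}]-\sum_{\varnothing\neq\widetilde{\mathbf{B}}\subseteq\mathbf{B}'}E[D\mid\mathbf{B}\setminus\widetilde{\mathbf{B}}=\mathbf{1},\widetilde{\mathbf{B}}=\mathbf{0},\mathbf{W}=\mathbf{w}]+\sum_{\mathbf{E}\in\mathfrak{T}}E[D\mid\mathbf{B}\setminus\mathbf{E}=\mathbf{1},\mathbf{E}=\mathbf{0},\mathbf{W}=\mathbf{w}]>0,$$ then $\mathbf{B}$ is singular for $\mathcal{D}(\mathbf{C},\Omega)$.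
   Context: $\Omega$ is a population with a probability distribution; events are binary random variables; $\overline{X}=1-X$; $\mathbb{L}(\mathbf{C})=\mathbf{C}\cup\{\overline{X}:X\in\mathbf{C}\}$; $\dot{\mathbb{P}}(\mathbb{L}(\mathbf{C}))$ is the set of subsets of $\mathbb{L}(\mathbf{C})$ not containing both $X$ and $\overline{X}$; $(L)_{\mathbf{c}}$ is the value of literal $L$ under assignment $\mathbf{c}$; $\bigwedge(\mathbf{B})=\min_{L\in\mathbf{B}}L$. Potential outcomes $D_{\mathbf{c}}(\omega)\in\{0,1\}$; consistency $D(\omega)=D_{\mathbf{C}(\omega)}(\omega)$. Conditioning on $\{\mathbf{B}\setminus\widetilde{\mathbf{B}}=\mathbf{1},\widetilde{\mathbf{B}}=\mathbf{0}\}$ means literals in $\widetilde{\mathbf{B}}$ equal 0 and the rest of $\mathbf{B}$ equal 1. $\mathbf{W}$ suffices to adjust for confounding of $\mathbf{C}$ on $D$ if $D_{\mathbf{c}}$ is independent of $\mathbf{C}$ given $\mathbf{W}=\mathbf{w}$ for all $\mathbf{c},\mathbf{w}$. A literal $L$ has a positive monotonic effect on $D$ relative to $\mathbf{C}$ if for all $\omega$ and assignments $\mathbf{c},\mathbf{c}'$ differing only in the variable underlying $L$ with $(L)_{\mathbf{c}}=1,(L)_{\mathbf{c}'}=0$, $D_{\mathbf{c}}(\omega)\ge D_{\mathbf{c}'}(\omega)$. A tree on a finite set $\mathbf{S}$ is a set $\mathfrak{T}$ of 2-element subsets with $|\mathfrak{T}|=|\mathbf{S}|-1$ connecting all elements (empty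 if $|\mathbf{S}|\le1$). $\mathbf{B}$ is a sufficient cause for $D$ relative to $\mathbf{C}$ for $\omega^*$ if some $\mathbf{c}^*$ has $(\bigwedge(\mathbf{B}))_{\mathbf{c}^*}=1$ and $D_{\mathbf{c}}(\omega^* )=1$ whenever $(\bigwedge(\mathbf{B}))_{\mathbf{c}}=1$; minimal if no proper subset is such; singular for $\omega^*$ if minimal and no other $\mathbf{B}'\in\dot{\mathbb{P}}(\mathbb{L}(\mathbf{C}))$ is a minimal sufficient cause for $\omega^*$; singular for $\mathcal{D}(\mathbf{C},\Omega)$ if singular for some $\omega^*\in\Omega$. *)

theory Defs
  imports "HOL-Probability.Probability"
begin

text \<open>Variables of C are indexed by a type 'v; each index x denotes a binary
random variable Cv x on the population. A literal is a pair (x, b): (x, True)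
is the event X, (x, False) is its complement 1 - X.\<close>

type_synonym 'v lit = "'v \<times> bool"

definition lits :: "'v set \<Rightarrow> 'v lit set" where
  "lits C = C \<times> UNIV"

definition dotP :: "'v set \<Rightarrow> 'v lit set set" where
  "dotP C = {B. B \<subseteq> lits C \<and> (\<forall>x. \<not> ((x, True) \<in> B \<and> (x, False) \<in> B))}"

definition assignments :: "'v set \<Rightarrow> ('v \<Rightarrow> bool) set" where
  "assignments C = {c. \<forall>v. v \<notin> C \<longrightarrow> \<not> c v}"

definition lit_val :: "'v lit \<Rightarrow> ('v \<Rightarrow> bool) \<Rightarrow> bool" where
  "lit_val L c = (c (fst L) = snd L)"

definition conj_val :: "'v lit set \<Rightarrow> ('v \<Rightarrow> bool) \<Rightarrow> bool" where
  "conj_val B c = (\<forall>L\<in>B. lit_val L c)"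

text \<open>Potential outcomes: Dpo c \<omega> is D_c(\<omega>).\<close>
definition sufficient_cause ::
  "'v set \<Rightarrow> (('v \<Rightarrow> bool) \<Rightarrow> 'o \<Rightarrow> bool) \<Rightarrow> 'v lit set \<Rightarrow> 'o \<Rightarrow> bool" where
  "sufficient_cause C Dpo B \<omega> =
     (B \<in> dotP C \<and> (\<exists>c\<in>assignments C. conj_val B c) \<and>
      (\<forall>c\<in>assignments C. conj_val B c \<longrightarrow> Dpo c \<omega>))"

definition minimal_sufficient_cause ::
  "'v set \<Rightarrow> (('v \<Rightarrow> bool) \<Rightarrow> 'o \<Rightarrow> bool) \<Rightarrow> 'v lit set \<Rightarrow> 'o \<Rightarrow> bool" where
  "minimal_sufficient_cause C Dpo B \<omega> =
     (sufficient_cause C Dpo B \<omega> \<and> (\<forall>B'. B' \<subset> B \<longrightarrow> \<not> sufficient_cause C Dpo B' \<omega>))"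

definition singular_cause_for ::
  "'v set \<Rightarrow> (('v \<Rightarrow> bool) \<Rightarrow> 'o \<Rightarrow> bool) \<Rightarrow> 'v lit set \<Rightarrow> 'o \<Rightarrow> bool" where
  "singular_cause_for C Dpo B \<omega> =
     (minimal_sufficient_cause C Dpo B \<omega> \<and>
      (\<forall>B'\<in>dotP C. B' \<noteq> B \<longrightarrow> \<not> minimal_sufficient_cause C Dpo B' \<omega>))"

definition singular_cause ::
  "'v set \<Rightarrow> 'o set \<Rightarrow> (('v \<Rightarrow> bool) \<Rightarrow> 'o \<Rightarrow> bool) \<Rightarrow> 'v lit set \<Rightarrow> bool" where
  "singular_cause C Omega Dpo B = (\<exists>\<omega>\<in>Omega. singular_cause_for C Dpo B \<omega>)"

definition pos_monotonic ::
  "'o set \<Rightarrow> 'v set \<Rightarrow> (('v \<Rightarrow> bool) \<Rightarrow> 'o \<Rightarrow> bool) \<Rightarrow> 'v lit \<Rightarrow> bool" where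
  "pos_monotonic Omega C Dpo L =
     (\<forall>\<omega>\<in>Omega. \<forall>c\<in>assignments C. \<forall>c'\<in>assignments C.
        (\<forall>v. v \<noteq> fst L \<longrightarrow> c v = c' v) \<and> lit_val L c \<and> \<not> lit_val L c'
        \<longrightarrow> (Dpo c' \<omega> \<longrightarrow> Dpo c \<omega>))"

definition C_at :: "'v set \<Rightarrow> ('v \<Rightarrow> 'o \<Rightarrow> bool) \<Rightarrow> 'o \<Rightarrow> ('v \<Rightarrow> bool)" where
  "C_at C Cv \<omega> = (\<lambda>v. if v \<in> C then Cv v \<omega> else False)"

text \<open>W suffices to adjust for confounding of C on D: for all c, w,
  D_c is independent of (the vector) C given W = w.  Written in product form
  P(D_c=1, C=c', W=w) P(W=w) = P(D_c=1, W=w) P(C=c', W=w) for every value c' of C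
  (for binary D_c this is conditional independence; vacuous when P(W=w)=0).\<close>
definition adjusts_confounding ::
  "'o measure \<Rightarrow> 'v set \<Rightarrow> ('v \<Rightarrow> 'o \<Rightarrow> bool) \<Rightarrow> (('v \<Rightarrow> bool) \<Rightarrow> 'o \<Rightarrow> bool)
   \<Rightarrow> ('o \<Rightarrow> 'w) \<Rightarrow> bool" where
  "adjusts_confounding M C Cv Dpo Wr =
     (\<forall>c\<in>assignments C. \<forall>c'\<in>assignments C. \<forall>w.
        measure M {\<omega>\<in>space M. Dpo c \<omega> \<and> C_at C Cv \<omega> = c' \<and> Wr \<omega> = w}
          * measure M {\<omega>\<in>space M. Wr \<omega> = w}
        = measure M {\<omega>\<in>space M. Dpo c \<omega> \<and> Wr \<omega> = w}
          * measure M {\<omega>\<in>space M. C_at C Cv \<omega> = c' \<and> Wr \<omega> = w})"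

definition lit_rv :: "('v \<Rightarrow> 'o \<Rightarrow> bool) \<Rightarrow> 'v lit \<Rightarrow> 'o \<Rightarrow> bool" where
  "lit_rv Cv L \<omega> = (Cv (fst L) \<omega> = snd L)"

definition cond_event ::
  "'o measure \<Rightarrow> ('v \<Rightarrow> 'o \<Rightarrow> bool) \<Rightarrow> ('o \<Rightarrow> 'w) \<Rightarrow> 'v lit set \<Rightarrow> 'v lit set \<Rightarrow> 'w \<Rightarrow> 'o set" where
  "cond_event M Cv Wr B Bt w =
     {\<omega>\<in>space M. (\<forall>L\<in>B. lit_rv Cv L \<omega> = (L \<notin> Bt)) \<and> Wr \<omega> = w}"

definition cond_exp :: "'o measure \<Rightarrow> ('o \<Rightarrow> bool) \<Rightarrow> 'o set \<Rightarrow> real" where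
  "cond_exp M D A = measure M {\<omega>\<in>A. D \<omega>} / measure M A"

definition is_tree :: "'a set \<Rightarrow> 'a set set \<Rightarrow> bool" where
  "is_tree S T =
     (finite S \<and> (\<forall>E\<in>T. E \<subseteq> S \<and> card E = 2) \<and> card T = card S - 1 \<and>
      (\<forall>x\<in>S. \<forall>y\<in>S. (x, y) \<in> {(a, b). {a, b} \<in> T}\<^sup>*))"

end

theory Submission
  imports Defs
begin

text \<open>Since B assigns every variable of C, each conditioning event is the event that C equals
  a fixed assignment c = c(B, Bt), and adjustment for W turns E[D | C = c, W = w] into
  P(D_c = 1, W = w) / P(W = w). The hypothesis therefore says that an alternating sum of
  indicators of the events {D_c = 1, W = w} has positive expectation, so it is positive at some
  outcome \<omega>. There, monotonicity bounds each edge term by its singleton terms, and a tree has fewer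
  edges than vertices inside any nonempty vertex set; hence positivity forces D_{c_B}(\<omega>) = 1 while
  D_c(\<omega>) = 0 for the flips of single literals of B_+ and of nonempty subsets of B'. Monotonicity
  spreads these zeros to every assignment other than c_B, which makes B the only minimal
  sufficient cause for \<omega>.\<close>

lemma rtrancl_exits_set:
  assumes "(x, y) \<in> R\<^sup>*" "x \<in> S" "y \<notin> S"
  obtains a b where "(a, b) \<in> R" "a \<in> S" "b \<notin> S"
  using assms
proof (induction rule: rtrancl_induct)
  case base
  then show ?case by simp
next
  case (step y z)
  then show ?case by (cases "y \<in> S") auto
qed

lemma card_outside_le_crossing_edges:
  assumes finV: "finite V" and edges: "\<And>E. E \<in> T \<Longrightarrow> E \<subseteq> V"
    and conn: "\<forall>x\<in>V. \<forall>y\<in>V. (x, y) \<in> {(a, b). {a, b} \<in> T}\<^sup>*"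
  shows "S \<subseteq> V \<Longrightarrow> S \<noteq> {} \<Longrightarrow> card (V - S) \<le> card {E\<in>T. \<not> E \<subseteq> S}"
proof (induction "card (V - S)" arbitrary: S)
  case 0
  then show ?case by simp
next
  case (Suc n)
  have finT: "finite T"
    using finite_subset[of T "Pow V"] edges finV by blast
  obtain s where s: "s \<in> S" using Suc.prems by blast
  have "V - S \<noteq> {}"
    using Suc.hyps(2) by (metis card.empty Zero_not_Suc)
  then obtain v where v: "v \<in> V" "v \<notin> S"
    by blast
  have "(s, v) \<in> {(a, b). {a, b} \<in> T}\<^sup>*"
    using conn s v(1) Suc.prems(1) by blast
  from rtrancl_exits_set[OF this s v(2)]
  obtain a b where ab: "{a, b} \<in> T" "a \<in> S" "b \<notin> S"
    by blast
  have bV: "b \<in> V" using ab edges by blast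
  have "V - insert b S = (V - S) - {b}"
    by blast
  then have n_eq: "n = card (V - insert b S)"
    using Suc.hyps(2) bV ab(3) by simp
  have "card (V - insert b S) \<le> card {E\<in>T. \<not> E \<subseteq> insert b S}"
    using Suc.hyps(1)[OF n_eq] Suc.prems(1) bV by blast
  also have "\<dots> < card {E\<in>T. \<not> E \<subseteq> S}"
  proof (rule psubset_card_mono)
    show "finite {E\<in>T. \<not> E \<subseteq> S}"
      using finT by simp
    have "{a, b} \<in> {E\<in>T. \<not> E \<subseteq> S}" "{a, b} \<notin> {E\<in>T. \<not> E \<subseteq> insert b S}"
      using ab by auto
    then show "{E\<in>T. \<not> E \<subseteq> insert b S} \<subset> {E\<in>T. \<not> E \<subseteq> S}"
      by blast
  qed
  finally show ?case using n_eq Suc.hyps(2) by linarith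
qed

lemma is_tree_finite_edges:
  assumes "is_tree V T"
  shows "finite T"
proof (rule finite_subset)
  show "T \<subseteq> Pow V" "finite (Pow V)"
    using assms unfolding is_tree_def by auto
qed

lemma is_tree_card_edges_within:
  assumes tree: "is_tree V T" and SV: "S \<subseteq> V" and S_ne: "S \<noteq> {}"
  shows "card {E\<in>T. E \<subseteq> S} < card S"
proof -
  have finV: "finite V" and edges: "\<And>E. E \<in> T \<Longrightarrow> E \<subseteq> V" and card_T: "card T = card V - 1"
    and conn: "\<forall>x\<in>V. \<forall>y\<in>V. (x, y) \<in> {(a, b). {a, b} \<in> T}\<^sup>*"
    using tree unfolding is_tree_def by blast+
  have finT: "finite T"
    using tree by (rule is_tree_finite_edges)
  have "card T = card ({E\<in>T. E \<subseteq> S} \<union> {E\<in>T. \<not> E \<subseteq> S})"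
    by (rule arg_cong[where f = card]) blast
  also have "\<dots> = card {E\<in>T. E \<subseteq> S} + card {E\<in>T. \<not> E \<subseteq> S}"
    by (rule card_Un_disjoint) (use finT in auto)
  finally have split: "card T = card {E\<in>T. E \<subseteq> S} + card {E\<in>T. \<not> E \<subseteq> S}" .
  have "card (V - S) \<le> card {E\<in>T. \<not> E \<subseteq> S}"
    using card_outside_le_crossing_edges[OF finV edges conn SV S_ne] .
  moreover have "card (V - S) = card V - card S"
    using finV SV by (simp add: card_Diff_subset finite_subset)
  moreover have "0 < card S"
    using finV SV S_ne by (simp add: card_gt_0_iff finite_subset)
  moreover have "card S \<le> card V"
    using finV SV by (rule card_mono)
  ultimately show ?thesis using card_T split by linarith
qed

text \<open>contrast f B_+ B' T is the left-hand side of the inequality in the theorem when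
  f X = E[D | B - X = 1, X = 0, W = w].\<close>
definition contrast :: "('a set \<Rightarrow> real) \<Rightarrow> 'a set \<Rightarrow> 'a set \<Rightarrow> 'a set set \<Rightarrow> real" where
  "contrast f P Q T =
     f {} - (\<Sum>L\<in>P. f {L}) - (\<Sum>X\<in>{X. X \<subseteq> Q \<and> X \<noteq> {}}. f X) + (\<Sum>E\<in>T. f E)"

definition contrast_index :: "'a set \<Rightarrow> 'a set \<Rightarrow> 'a set set \<Rightarrow> 'a set set" where
  "contrast_index P Q T = {{}} \<union> {{L} | L. L \<in> P} \<union> {X. X \<subseteq> Q \<and> X \<noteq> {}} \<union> T"

lemma contrast_cong:
  assumes "\<And>X. X \<in> contrast_index P Q T \<Longrightarrow> f X = g X"
  shows "contrast f P Q T = contrast g P Q T"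
  unfolding contrast_def using assms
  by (auto simp: contrast_index_def intro!: sum.cong arg_cong2[where f = "(+)"] arg_cong2[where f = "(-)"])

lemma contrast_divide: "contrast (\<lambda>X. f X / c) P Q T = contrast f P Q T / c"
  by (simp add: contrast_def diff_divide_distrib add_divide_distrib sum_divide_distrib)

lemma contrast_zero [simp]: "contrast (\<lambda>X. 0) P Q T = 0"
  by (simp add: contrast_def)

lemma contrast_of_bool_pos_on_tree:
  fixes F :: "'a set \<Rightarrow> bool"
  assumes tree: "is_tree P T" and finQ: "finite Q"
    and edge_mono: "\<And>E L. E \<in> T \<Longrightarrow> L \<in> E \<Longrightarrow> F E \<Longrightarrow> F {L}"
    and pos: "contrast (\<lambda>X. of_bool (F X)) P Q T > 0"
  shows "F {}" and "\<And>L. L \<in> P \<Longrightarrow> \<not> F {L}" and "\<And>X. X \<subseteq> Q \<Longrightarrow> X \<noteq> {} \<Longrightarrow> \<not> F X"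
proof -
  have finP: "finite P" and edges: "\<And>E. E \<in> T \<Longrightarrow> E \<subseteq> P \<and> card E = 2"
    using tree unfolding is_tree_def by auto
  have finT: "finite T"
    using tree by (rule is_tree_finite_edges)
  define S where "S = {L\<in>P. F {L}}"
  have edge_within: "E \<subseteq> S" if "E \<in> T" "F E" for E
    using that edges edge_mono unfolding S_def by blast
  have sum_P: "(\<Sum>L\<in>P. of_bool (F {L})) = real (card S)"
    using finP by (simp add: S_def Int_def)
  have sum_T: "(\<Sum>E\<in>T. of_bool (F E)) \<le> real (card {E\<in>T. E \<subseteq> S})"
  proof -
    have "(\<Sum>E\<in>T. of_bool (F E)) \<le> (\<Sum>E\<in>T. of_bool (E \<subseteq> S) :: real)"
      by (rule sum_mono) (use edge_within in auto)
    then show ?thesis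
      using finT by (simp add: Int_def)
  qed
  have sum_Q: "0 \<le> (\<Sum>X\<in>{X. X \<subseteq> Q \<and> X \<noteq> {}}. of_bool (F X) :: real)"
    by (rule sum_nonneg) simp
  \<comment> \<open>A tree has fewer than |S| edges inside S, so the edge terms cannot outweigh the singletons.\<close>
  have "S = {}"
  proof (rule ccontr)
    assume "S \<noteq> {}"
    then have "card {E\<in>T. E \<subseteq> S} < card S"
      by (rule is_tree_card_edges_within[OF tree, rotated]) (simp add: S_def)
    then show False
      using pos sum_P sum_T sum_Q unfolding contrast_def by (simp add: of_bool_def split: if_splits)
  qed
  then show not_single: "\<And>L. L \<in> P \<Longrightarrow> \<not> F {L}"
    unfolding S_def by blast
  have "\<not> F E" if "E \<in> T" for E
    using edge_within[OF that] edges[OF that] \<open>S = {}\<close> by fastforce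
  then have pos_Q: "(\<Sum>X\<in>{X. X \<subseteq> Q \<and> X \<noteq> {}}. of_bool (F X) :: real) < of_bool (F {})"
    using pos not_single unfolding contrast_def by simp
  then show "F {}"
    using sum_Q by (cases "F {}") auto
  have finite_Q_subsets: "finite {X. X \<subseteq> Q \<and> X \<noteq> {}}"
    using finQ by simp
  show "\<not> F X" if "X \<subseteq> Q" "X \<noteq> {}" for X
  proof
    assume "F X"
    then have "1 \<le> (\<Sum>X\<in>{X. X \<subseteq> Q \<and> X \<noteq> {}}. of_bool (F X) :: real)"
      using member_le_sum[of X _ "\<lambda>X. of_bool (F X) :: real"] that finite_Q_subsets by auto
    then show False
      using pos_Q by (cases "F {}") auto
  qed
qed

text \<open>The assignment with B - Bt = 1 and Bt = 0; variables without a literal in B are False.\<close>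
definition flip_assign :: "'v lit set \<Rightarrow> 'v lit set \<Rightarrow> 'v \<Rightarrow> bool" where
  "flip_assign B Bt v \<longleftrightarrow> (\<exists>b. (v, b) \<in> B \<and> b = ((v, b) \<notin> Bt))"

lemma dotP_lit_unique: "B \<in> dotP C \<Longrightarrow> (v, b) \<in> B \<Longrightarrow> (v, b') \<in> B \<Longrightarrow> b' = b"
  unfolding dotP_def by (cases b; cases b') auto

lemma finite_dotP:
  assumes "finite C" and "B \<in> dotP C"
  shows "finite B"
proof (rule finite_subset)
  show "B \<subseteq> C \<times> UNIV"
    using assms(2) unfolding dotP_def lits_def by blast
  show "finite (C \<times> (UNIV :: bool set))"
    using assms(1) by simp
qed

lemma flip_assign_in_assignments: "B \<in> dotP C \<Longrightarrow> flip_assign B Bt \<in> assignments C"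
  unfolding assignments_def flip_assign_def dotP_def lits_def by auto

lemma lit_val_flip_assign:
  assumes B: "B \<in> dotP C" and L: "L \<in> B"
  shows "lit_val L (flip_assign B Bt) \<longleftrightarrow> L \<notin> Bt"
proof -
  obtain v b where L_eq: "L = (v, b)" by force
  have "(v, b') \<in> B \<longleftrightarrow> b' = b" for b'
    using dotP_lit_unique[OF B] L L_eq by blast
  then have "flip_assign B Bt v \<longleftrightarrow> b = (L \<notin> Bt)"
    unfolding flip_assign_def L_eq by auto
  then show ?thesis
    unfolding lit_val_def L_eq by auto
qed

lemma fst_image_dotP_card_eq:
  assumes B: "B \<in> dotP C" and finC: "finite C" and card_B: "card B = card C"
  shows "fst ` B = C"
proof (rule card_subset_eq[OF finC])
  show "fst ` B \<subseteq> C"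
    using B unfolding dotP_def lits_def by auto
  have "inj_on fst B"
    unfolding inj_on_def by (auto dest: dotP_lit_unique[OF B])
  then show "card (fst ` B) = card C"
    using card_B by (simp add: card_image)
qed

lemma assignment_eq_iff_lit_vals:
  assumes B: "B \<in> dotP C" and finC: "finite C" and card_B: "card B = card C"
    and c: "c \<in> assignments C" and c': "c' \<in> assignments C"
  shows "c = c' \<longleftrightarrow> (\<forall>L\<in>B. lit_val L c \<longleftrightarrow> lit_val L c')"
proof
  show "\<forall>L\<in>B. lit_val L c \<longleftrightarrow> lit_val L c'" if "c = c'"
    using that by simp
  show "c = c'" if agree: "\<forall>L\<in>B. lit_val L c \<longleftrightarrow> lit_val L c'"
  proof
    fix v
    show "c v = c' v"
    proof (cases "v \<in> C")
      case True
      then obtain b where "(v, b) \<in> B"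
        using fst_image_dotP_card_eq[OF B finC card_B] by force
      then show ?thesis
        using agree unfolding lit_val_def by fastforce
    next
      case False
      then show ?thesis
        using c c' unfolding assignments_def by blast
    qed
  qed
qed

lemma assignment_eq_flip_assign:
  assumes B: "B \<in> dotP C" and finC: "finite C" and card_B: "card B = card C"
    and c: "c \<in> assignments C"
  shows "c = flip_assign B {L\<in>B. \<not> lit_val L c}"
proof (rule assignment_eq_iff_lit_vals[OF B finC card_B c flip_assign_in_assignments[OF B], THEN iffD2])
  show "\<forall>L\<in>B. lit_val L c \<longleftrightarrow> lit_val L (flip_assign B {L\<in>B. \<not> lit_val L c})"
    using lit_val_flip_assign[OF B] by simp
qed

lemma lit_val_flip_assign_empty_iff:
  assumes B: "B \<in> dotP C" and finC: "finite C" and card_B: "card B = card C"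
    and L: "L \<in> lits C"
  shows "lit_val L (flip_assign B {}) \<longleftrightarrow> L \<in> B"
proof -
  obtain v b where L_eq: "L = (v, b)" by force
  then obtain b' where vb': "(v, b') \<in> B"
    using L fst_image_dotP_card_eq[OF B finC card_B] unfolding lits_def by force
  have "flip_assign B {} v = b'"
    using lit_val_flip_assign[OF B vb', of "{}"] unfolding lit_val_def by simp
  moreover have "L \<in> B \<longleftrightarrow> b = b'"
  proof
    show "b = b'" if "L \<in> B"
      using dotP_lit_unique[OF B vb'] that unfolding L_eq by simp
  qed (use L_eq vb' in simp)
  ultimately show ?thesis
    unfolding lit_val_def L_eq by auto
qed

lemma cond_event_eq_flip_assign:
  assumes B: "B \<in> dotP C" and finC: "finite C" and card_B: "card B = card C"
  shows "cond_event M Cv Wr B Bt w = {\<omega>\<in>space M. C_at C Cv \<omega> = flip_assign B Bt \<and> Wr \<omega> = w}"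
proof -
  have C_at: "C_at C Cv \<omega> \<in> assignments C" for \<omega>
    unfolding C_at_def assignments_def by simp
  have lit_rv: "lit_rv Cv L \<omega> = lit_val L (C_at C Cv \<omega>)" if "L \<in> B" for L \<omega>
    using that B unfolding lit_rv_def lit_val_def C_at_def dotP_def lits_def by (cases L) auto
  have "(\<forall>L\<in>B. lit_rv Cv L \<omega> = (L \<notin> Bt)) \<longleftrightarrow> C_at C Cv \<omega> = flip_assign B Bt" for \<omega>
    using assignment_eq_iff_lit_vals[OF B finC card_B C_at flip_assign_in_assignments[OF B]]
      lit_val_flip_assign[OF B] lit_rv by simp
  then show ?thesis
    unfolding cond_event_def by simp
qed

lemma pos_monotonicD:
  assumes "pos_monotonic Om C Dpo L" "\<omega> \<in> Om" "c \<in> assignments C" "c' \<in> assignments C"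
    and "\<And>v. v \<noteq> fst L \<Longrightarrow> c v = c' v" "lit_val L c" "\<not> lit_val L c'" "Dpo c' \<omega>"
  shows "Dpo c \<omega>"
  using assms unfolding pos_monotonic_def by blast

lemma Dpo_flip_assign_remove:
  assumes B: "B \<in> dotP C" and mono: "pos_monotonic Om C Dpo L" and L: "L \<in> B"
    and \<omega>: "\<omega> \<in> Om" and D: "Dpo (flip_assign B Bt) \<omega>"
  shows "Dpo (flip_assign B (Bt - {L})) \<omega>"
proof (cases "L \<in> Bt")
  case True
  show ?thesis
  proof (rule pos_monotonicD[OF mono \<omega> flip_assign_in_assignments[OF B] flip_assign_in_assignments[OF B]])
    show "flip_assign B (Bt - {L}) v = flip_assign B Bt v" if "v \<noteq> fst L" for v
      using that unfolding flip_assign_def by force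
    show "lit_val L (flip_assign B (Bt - {L}))" "\<not> lit_val L (flip_assign B Bt)"
      using lit_val_flip_assign[OF B L] True by auto
  qed (rule D)
qed (use D in simp)

lemma Dpo_flip_assign_Diff:
  assumes B: "B \<in> dotP C" and \<omega>: "\<omega> \<in> Om" and "finite S" and "S \<subseteq> B"
    and mono: "\<And>L. L \<in> S \<Longrightarrow> pos_monotonic Om C Dpo L"
    and "Dpo (flip_assign B K) \<omega>"
  shows "Dpo (flip_assign B (K - S)) \<omega>"
  using assms(3-)
proof (induction S rule: finite_induct)
  case (insert L S)
  have "Dpo (flip_assign B ((K - S) - {L})) \<omega>"
  proof (rule Dpo_flip_assign_remove[OF B _ _ \<omega>])
    show "pos_monotonic Om C Dpo L" "L \<in> B"
      using insert.prems by auto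
    show "Dpo (flip_assign B (K - S)) \<omega>"
      by (rule insert.IH) (use insert.prems in auto)
  qed
  moreover have "K - insert L S = (K - S) - {L}"
    by blast
  ultimately show ?case
    by simp
qed simp

lemma singular_cause_for_if_unique_outcome:
  assumes B: "B \<in> dotP C" and finC: "finite C" and card_B: "card B = card C"
    and D_B: "Dpo (flip_assign B {}) \<omega>"
    and unique: "\<And>c. c \<in> assignments C \<Longrightarrow> Dpo c \<omega> \<Longrightarrow> c = flip_assign B {}"
  shows "singular_cause_for C Dpo B \<omega>"
proof -
  let ?c\<^sub>B = "flip_assign B {}"
  have c\<^sub>B: "?c\<^sub>B \<in> assignments C"
    using flip_assign_in_assignments[OF B] .
  have conj_B: "conj_val B c \<longleftrightarrow> c = ?c\<^sub>B" if c: "c \<in> assignments C" for c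
  proof
    assume "conj_val B c"
    then have "{L\<in>B. \<not> lit_val L c} = {}"
      unfolding conj_val_def by blast
    then show "c = ?c\<^sub>B"
      using assignment_eq_flip_assign[OF B finC card_B c] by metis
  qed (use lit_val_flip_assign[OF B] in \<open>simp add: conj_val_def\<close>)
  have sufficient: "sufficient_cause C Dpo B \<omega>"
    unfolding sufficient_cause_def using B c\<^sub>B conj_B D_B unique by blast
  have not_sufficient: "\<not> sufficient_cause C Dpo B'' \<omega>" if sub: "B'' \<subset> B" for B''
  proof
    assume sufficient'': "sufficient_cause C Dpo B'' \<omega>"
    obtain L where L: "L \<in> B" "L \<notin> B''"
      using sub by blast
    have "conj_val B'' (flip_assign B {L})"
      unfolding conj_val_def using sub L lit_val_flip_assign[OF B] by auto
    then have "flip_assign B {L} = ?c\<^sub>B"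
      using sufficient'' unique flip_assign_in_assignments[OF B] unfolding sufficient_cause_def by blast
    then show False
      using lit_val_flip_assign[OF B L(1), of "{L}"] lit_val_flip_assign[OF B L(1), of "{}"] by simp
  qed
  have subset: "B3 \<subseteq> B" if B3: "B3 \<in> dotP C" "sufficient_cause C Dpo B3 \<omega>" for B3
  proof -
    obtain c where c: "c \<in> assignments C" "conj_val B3 c" and "Dpo c \<omega>"
      using B3(2) unfolding sufficient_cause_def by blast
    then have "conj_val B3 ?c\<^sub>B"
      using unique by blast
    then show ?thesis
      using B3(1) lit_val_flip_assign_empty_iff[OF B finC card_B]
      unfolding conj_val_def dotP_def by blast
  qed
  show ?thesis
    unfolding singular_cause_for_def minimal_sufficient_cause_def
    using sufficient not_sufficient subset by blast
qed

lemma not_Dpo_flip_assign: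
  assumes B: "B \<in> dotP C" and finB: "finite B" and B_split: "B = P \<union> Q" and \<omega>: "\<omega> \<in> Om"
    and mono: "\<And>L. L \<in> P \<Longrightarrow> pos_monotonic Om C Dpo L"
    and single: "\<And>L. L \<in> P \<Longrightarrow> \<not> Dpo (flip_assign B {L}) \<omega>"
    and joint: "\<And>X. X \<subseteq> Q \<Longrightarrow> X \<noteq> {} \<Longrightarrow> \<not> Dpo (flip_assign B X) \<omega>"
    and Bt: "Bt \<subseteq> B" "Bt \<noteq> {}"
  shows "\<not> Dpo (flip_assign B Bt) \<omega>"
proof
  assume D: "Dpo (flip_assign B Bt) \<omega>"
  have finBt: "finite Bt"
    using finB Bt(1) by (rule finite_subset[rotated])
  show False
  proof (cases "Bt \<inter> Q = {}")
    case True
    then obtain L where L: "L \<in> Bt" "L \<in> P"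
      using Bt B_split by blast
    have "Dpo (flip_assign B (Bt - (Bt - {L}))) \<omega>"
      by (rule Dpo_flip_assign_Diff[OF B \<omega>]) (use finBt Bt True B_split mono D in auto)
    moreover have "Bt - (Bt - {L}) = {L}"
      using L by blast
    ultimately show False
      using single L by simp
  next
    case False
    have "Dpo (flip_assign B (Bt - (Bt - Q))) \<omega>"
      by (rule Dpo_flip_assign_Diff[OF B \<omega>]) (use finBt Bt B_split mono D in auto)
    moreover have "Bt - (Bt - Q) = Bt \<inter> Q"
      by blast
    ultimately show False
      using joint False by simp
  qed
qed

lemma singular_cause_for_if_contrast_pos:
  assumes B: "B \<in> dotP C" and finC: "finite C" and card_B: "card B = card C"
    and B_split: "B = P \<union> Q" and tree: "is_tree P T" and \<omega>: "\<omega> \<in> Om"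
    and mono: "\<And>L. L \<in> P \<Longrightarrow> pos_monotonic Om C Dpo L"
    and pos: "contrast (\<lambda>X. of_bool (Dpo (flip_assign B X) \<omega>)) P Q T > 0"
  shows "singular_cause_for C Dpo B \<omega>"
proof -
  have finB: "finite B"
    using finC B by (rule finite_dotP)
  have finQ: "finite Q"
    using finB B_split by simp
  have finP: "finite P"
    using tree unfolding is_tree_def by blast
  have edge_mono: "Dpo (flip_assign B {L}) \<omega>"
    if E: "E \<in> T" "L \<in> E" "Dpo (flip_assign B E) \<omega>" for E L
  proof -
    have EP: "E \<subseteq> P"
      using E(1) tree unfolding is_tree_def by blast
    have "Dpo (flip_assign B (E - (E - {L}))) \<omega>"
    proof (rule Dpo_flip_assign_Diff[OF B \<omega>])
      show "finite (E - {L})"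
        by (rule finite_subset[OF _ finP]) (use EP in blast)
      show "E - {L} \<subseteq> B"
        using EP B_split by blast
      show "pos_monotonic Om C Dpo L'" if "L' \<in> E - {L}" for L'
        using that EP mono by blast
    qed (rule E(3))
    moreover have "E - (E - {L}) = {L}"
      using E(2) by blast
    ultimately show ?thesis
      by simp
  qed
  have outcomes: "Dpo (flip_assign B {}) \<omega>" "\<And>L. L \<in> P \<Longrightarrow> \<not> Dpo (flip_assign B {L}) \<omega>"
    "\<And>X. X \<subseteq> Q \<Longrightarrow> X \<noteq> {} \<Longrightarrow> \<not> Dpo (flip_assign B X) \<omega>"
    using contrast_of_bool_pos_on_tree[where F = "\<lambda>X. Dpo (flip_assign B X) \<omega>", OF tree finQ _ pos]
      edge_mono by blast+
  have unique: "c = flip_assign B {}" if c: "c \<in> assignments C" "Dpo c \<omega>" for c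
  proof -
    let ?Bt = "{L\<in>B. \<not> lit_val L c}"
    have c_eq: "c = flip_assign B ?Bt"
      using assignment_eq_flip_assign[OF B finC card_B c(1)] .
    have "Dpo (flip_assign B ?Bt) \<omega>"
      using c_eq c(2) by (rule subst[where P = "\<lambda>c. Dpo c \<omega>"])
    then have "?Bt = {}"
    proof (rule contrapos_pp)
      assume "?Bt \<noteq> {}"
      show "\<not> Dpo (flip_assign B ?Bt) \<omega>"
        by (rule not_Dpo_flip_assign[OF B finB B_split \<omega> mono outcomes(2,3) _ \<open>?Bt \<noteq> {}\<close>]) auto
    qed
    then show ?thesis
      using c_eq by metis
  qed
  show ?thesis
    using singular_cause_for_if_unique_outcome[where Dpo = Dpo and \<omega> = \<omega>,
        OF B finC card_B outcomes(1) unique] .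
qed

lemma (in prob_space) cond_exp_adjusted:
  assumes W: "{\<omega>\<in>space M. Wr \<omega> = w} \<in> events"
    and consistency: "\<And>\<omega>. \<omega> \<in> space M \<Longrightarrow> D \<omega> = Dpo (C_at C Cv \<omega>) \<omega>"
    and adjust: "adjusts_confounding M C Cv Dpo Wr" and c: "c \<in> assignments C"
    and pos: "prob {\<omega>\<in>space M. C_at C Cv \<omega> = c \<and> Wr \<omega> = w} > 0"
  shows "cond_exp M D {\<omega>\<in>space M. C_at C Cv \<omega> = c \<and> Wr \<omega> = w}
    = prob {\<omega>\<in>space M. Dpo c \<omega> \<and> Wr \<omega> = w} / prob {\<omega>\<in>space M. Wr \<omega> = w}"
proof -
  let ?A = "{\<omega>\<in>space M. C_at C Cv \<omega> = c \<and> Wr \<omega> = w}"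
  have "prob ?A \<le> prob {\<omega>\<in>space M. Wr \<omega> = w}"
    using W by (intro finite_measure_mono) auto
  then have W_pos: "prob {\<omega>\<in>space M. Wr \<omega> = w} > 0"
    using pos by linarith
  have "{\<omega>\<in>?A. D \<omega>} = {\<omega>\<in>space M. Dpo c \<omega> \<and> C_at C Cv \<omega> = c \<and> Wr \<omega> = w}"
    using consistency by auto
  moreover have "prob {\<omega>\<in>space M. Dpo c \<omega> \<and> C_at C Cv \<omega> = c \<and> Wr \<omega> = w}
      * prob {\<omega>\<in>space M. Wr \<omega> = w} = prob {\<omega>\<in>space M. Dpo c \<omega> \<and> Wr \<omega> = w} * prob ?A"
    using adjust c unfolding adjusts_confounding_def by blast
  ultimately show ?thesis
    unfolding cond_exp_def using pos W_pos by (simp add: field_simps)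
qed

lemma (in prob_space) contrast_prob_potential_outcomes_pos:
  assumes B: "B \<in> dotP C" and finC: "finite C" and card_B: "card B = card C"
    and W: "{\<omega>\<in>space M. Wr \<omega> = w} \<in> events"
    and consistency: "\<And>\<omega>. \<omega> \<in> space M \<Longrightarrow> D \<omega> = Dpo (C_at C Cv \<omega>) \<omega>"
    and adjust: "adjusts_confounding M C Cv Dpo Wr"
    and pos: "\<And>X. X \<in> contrast_index P Q T \<Longrightarrow> prob (cond_event M Cv Wr B X w) > 0"
    and contrast_pos: "contrast (\<lambda>X. cond_exp M D (cond_event M Cv Wr B X w)) P Q T > 0"
  shows "contrast (\<lambda>X. prob {\<omega>\<in>space M. Dpo (flip_assign B X) \<omega> \<and> Wr \<omega> = w}) P Q T > 0"
proof -
  let ?p\<^sub>W = "prob {\<omega>\<in>space M. Wr \<omega> = w}"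
  have "cond_exp M D (cond_event M Cv Wr B X w)
      = prob {\<omega>\<in>space M. Dpo (flip_assign B X) \<omega> \<and> Wr \<omega> = w} / ?p\<^sub>W"
    if "X \<in> contrast_index P Q T" for X
  proof -
    have event: "cond_event M Cv Wr B X w = {\<omega>\<in>space M. C_at C Cv \<omega> = flip_assign B X \<and> Wr \<omega> = w}"
      by (rule cond_event_eq_flip_assign[OF B finC card_B])
    show ?thesis
      unfolding event
      using cond_exp_adjusted[OF W consistency adjust flip_assign_in_assignments[OF B]
          pos[OF that, unfolded event]] .
  qed
  then have "contrast (\<lambda>X. cond_exp M D (cond_event M Cv Wr B X w)) P Q T
      = contrast (\<lambda>X. prob {\<omega>\<in>space M. Dpo (flip_assign B X) \<omega> \<and> Wr \<omega> = w} / ?p\<^sub>W) P Q T"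
    by (rule contrast_cong)
  then have "contrast (\<lambda>X. prob {\<omega>\<in>space M. Dpo (flip_assign B X) \<omega> \<and> Wr \<omega> = w}) P Q T / ?p\<^sub>W > 0"
    using contrast_pos by (simp only: contrast_divide)
  then show ?thesis
    by (simp add: zero_less_divide_iff)
qed

lemma (in prob_space) exists_outcome_contrast_pos:
  assumes "finite P" "finite Q" "finite T" and A: "\<And>X. A X \<in> events"
    and pos: "contrast (\<lambda>X. prob (A X)) P Q T > 0"
  shows "\<exists>\<omega>\<in>space M. contrast (\<lambda>X. of_bool (\<omega> \<in> A X)) P Q T > 0"
proof (rule ccontr)
  assume "\<not> ?thesis"
  then have "0 \<le> integral\<^sup>L M (\<lambda>\<omega>. - contrast (\<lambda>X. indicator (A X) \<omega>) P Q T)"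
    by (intro Bochner_Integration.integral_nonneg) (auto simp: indicator_def)
  moreover have "integrable M (indicator (A X) :: 'a \<Rightarrow> real)" for X
    using A emeasure_finite[of "A X"] by (auto simp: less_top[symmetric])
  then have "integral\<^sup>L M (\<lambda>\<omega>. contrast (\<lambda>X. indicator (A X) \<omega>) P Q T) = contrast (\<lambda>X. prob (A X)) P Q T"
    unfolding contrast_def using A by (simp add: Int_absorb2 sets.sets_into_space)
  ultimately show False
    using pos by simp
qed

theorem mainTheorem16:
  fixes M :: "'o measure"
    and C :: "'v set" and Cv :: "'v \<Rightarrow> 'o \<Rightarrow> bool"
    and D :: "'o \<Rightarrow> bool" and Dpo :: "('v \<Rightarrow> bool) \<Rightarrow> 'o \<Rightarrow> bool"
    and Wr :: "'o \<Rightarrow> 'w" and w :: 'w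
    and B Bplus B' :: "'v lit set" and T :: "'v lit set set"
  assumes prob: "prob_space M"
    and finC: "finite C"
    and meas_C: "\<And>x. x \<in> C \<Longrightarrow> {\<omega>\<in>space M. Cv x \<omega>} \<in> sets M"
    and meas_W: "\<And>v. {\<omega>\<in>space M. Wr \<omega> = v} \<in> sets M"
    and meas_D: "{\<omega>\<in>space M. D \<omega>} \<in> sets M"
    and meas_Dpo: "\<And>c. c \<in> assignments C \<Longrightarrow> {\<omega>\<in>space M. Dpo c \<omega>} \<in> sets M"
    and consistency: "\<And>\<omega>. \<omega> \<in> space M \<Longrightarrow> D \<omega> = Dpo (C_at C Cv \<omega>) \<omega>"
    and B_split: "B = Bplus \<union> B'" and B_disj: "Bplus \<inter> B' = {}"
    and B_in: "B \<in> dotP C"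
    and B_card: "card B = card C"
    and monotone: "\<And>L. L \<in> Bplus \<Longrightarrow> pos_monotonic (space M) C Dpo L"
    and adjust: "adjusts_confounding M C Cv Dpo Wr"
    and tree: "is_tree Bplus T"
    and pos: "\<And>Bt. Bt \<in> {{}} \<union> {{L} | L. L \<in> Bplus} \<union> {Bt. Bt \<subseteq> B' \<and> Bt \<noteq> {}} \<union> T
               \<Longrightarrow> measure M (cond_event M Cv Wr B Bt w) > 0"
    and ineq: "cond_exp M D (cond_event M Cv Wr B {} w)
       - (\<Sum>L\<in>Bplus. cond_exp M D (cond_event M Cv Wr B {L} w))
       - (\<Sum>Bt\<in>{Bt. Bt \<subseteq> B' \<and> Bt \<noteq> {}}. cond_exp M D (cond_event M Cv Wr B Bt w))
       + (\<Sum>E\<in>T. cond_exp M D (cond_event M Cv Wr B E w)) > 0"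
  shows "singular_cause C (space M) Dpo B"
proof -
  interpret P: prob_space M by (rule prob)
  define A where "A X = {\<omega>\<in>space M. Dpo (flip_assign B X) \<omega> \<and> Wr \<omega> = w}" for X
  have A_events: "A X \<in> sets M" for X
  proof -
    have "A X = {\<omega>\<in>space M. Dpo (flip_assign B X) \<omega>} \<inter> {\<omega>\<in>space M. Wr \<omega> = w}"
      unfolding A_def by blast
    then show ?thesis
      using meas_Dpo[OF flip_assign_in_assignments[OF B_in]] meas_W by simp
  qed
  have ineq': "contrast (\<lambda>X. cond_exp M D (cond_event M Cv Wr B X w)) Bplus B' T > 0"
    using ineq by (simp only: contrast_def)
  have pos_A: "contrast (\<lambda>X. measure M (A X)) Bplus B' T > 0"
    unfolding A_def
  proof (rule P.contrast_prob_potential_outcomes_pos[OF B_in finC B_card meas_W _ adjust _ ineq'])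
    show "D \<omega> = Dpo (C_at C Cv \<omega>) \<omega>" if "\<omega> \<in> space M" for \<omega>
      using consistency[OF that] .
    show "measure M (cond_event M Cv Wr B X w) > 0" if "X \<in> contrast_index Bplus B' T" for X
      using pos that unfolding contrast_index_def by blast
  qed
  have finP: "finite Bplus" and finB': "finite B'"
    using finite_dotP[OF finC B_in] B_split by simp_all
  obtain \<omega> where \<omega>: "\<omega> \<in> space M"
    and pos_\<omega>: "contrast (\<lambda>X. of_bool (\<omega> \<in> A X)) Bplus B' T > 0"
    using P.exists_outcome_contrast_pos[OF finP finB' is_tree_finite_edges[OF tree] A_events pos_A]
    by blast
  moreover have "Wr \<omega> = w"
    using pos_\<omega> by (rule contrapos_pp) (simp add: A_def)
  ultimately have "contrast (\<lambda>X. of_bool (Dpo (flip_assign B X) \<omega>)) Bplus B' T > 0"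
    by (simp add: A_def)
  then show ?thesis
    unfolding singular_cause_def
    using singular_cause_for_if_contrast_pos[OF B_in finC B_card B_split tree \<omega> monotone] \<omega> by blast
qed

end
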